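(* $$\sum_{n\ge0}S_n(1,q)\frac{z^n}{n!}=\frac{1}{(1-\sin z)^q},$$ and for $n\ge1$, $$S_n(x,-1)=\begin{cases}(1-x)(1-2x)^{m-1},& n=2m,\\ -(1-2x)^m,& n=2m+1.\end{cases}$$
   Context: Permutations of $[n]=\{1,\dots,n\}$ are written in standard cycle decomposition (each cycle starts with its smallest element, cycles in increasing order of smallest elements). $\pi$ has an excedance at $i$ if $\pi(i)>i$; ${\rm exc}(\pi)$ is the number of excedances, ${\rm cyc}(\pi)$ the number of cycles. A value $x$ is a double excedance of $\pi$ if $\pi^{-1}(x)<x<\pi(x)$. A permutation $\pi$ of $[n]$ is a simsun permutation of the second kind if for every $k\in\{0,1,\dots,n\}$, deleting the $k$ largest letters from the cycle decomposition of $\pi$ yields a permutation with no double excedances; $\mathcal{SS}_n$ is the set of these, $S_n(x,q)=\sum_{\pi\in\mathcal{SS}_n}x^{{\rm exc}(\pi)}q^{{\rm cyc}(\pi)}$, and $S_0(x,q)=1$. *)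

theory Defs
  imports "HOL-Combinatorics.Permutations" "HOL-Computational_Algebra.Formal_Power_Series"
begin

text \<open>Permutations of [n] = {1..n} are functions nat => nat with p permutes {1..n}.\<close>

definition exc :: "(nat \<Rightarrow> nat) \<Rightarrow> nat \<Rightarrow> nat" where
  "exc p n = card {i \<in> {1..n}. p i > i}"

text \<open>Number of cycles (fixed points count as cycles) = number of orbits.\<close>
definition cyc :: "(nat \<Rightarrow> nat) \<Rightarrow> nat \<Rightarrow> nat" where
  "cyc p n = card ((\<lambda>i. {(p ^^ j) i | j. True}) ` {1..n})"

text \<open>Deleting all letters larger than m from the cycle decomposition of p:
  each remaining letter i is sent to the first letter <= m following it in its cycle.\<close>
definition del_letters :: "(nat \<Rightarrow> nat) \<Rightarrow> nat \<Rightarrow> nat \<Rightarrow> nat" where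
  "del_letters p m i = (p ^^ (LEAST j. 0 < j \<and> (p ^^ j) i \<le> m)) i"

definition no_double_exc :: "(nat \<Rightarrow> nat) \<Rightarrow> nat \<Rightarrow> bool" where
  "no_double_exc s m \<longleftrightarrow>
     \<not> (\<exists>x \<in> {1..m}. \<exists>y \<in> {1..m}. s y = x \<and> y < x \<and> x < s x)"

definition simsun2 :: "nat \<Rightarrow> (nat \<Rightarrow> nat) set" where
  "simsun2 n = {p. p permutes {1..n} \<and>
      (\<forall>k \<in> {0..n}. no_double_exc (del_letters p (n - k)) (n - k))}"

definition S_poly :: "nat \<Rightarrow> 'a::comm_ring_1 \<Rightarrow> 'a \<Rightarrow> 'a" where
  "S_poly n x q = (\<Sum>p \<in> simsun2 n. x ^ exc p n * q ^ cyc p n)"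

end

theory Submission
  imports Defs "HOL-Computational_Algebra.Polynomial" "HOL-Combinatorics.Orbits"
begin

text \<open>
  Deleting the largest letter \<open>n + 1\<close> maps \<open>SS\<^sub>n\<^sub>+\<^sub>1\<close> onto \<open>SS\<^sub>n\<close>. The fibre over \<open>\<sigma>\<close>
  consists of \<open>\<sigma>\<close> itself, where \<open>n + 1\<close> is a new fixed point, and of \<open>\<sigma>\<close> with \<open>n + 1\<close>
  inserted after a letter \<open>i\<close> that is not the image of a smaller letter. There are
  \<open>n - exc \<sigma>\<close> such letters; inserting after the \<open>exc \<sigma>\<close> excedance positions among them keeps the
  number of excedances, inserting after the others raises it by one, and no insertion changes the
  number of cycles. Hence \<open>S\<^sub>n\<^sub>+\<^sub>1 = (q + n x) S\<^sub>n + (x - 2x\<^sup>2) \<partial>\<^sub>x S\<^sub>n\<close>, a recurrence that the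
  closed forms for \<open>q = -1\<close> satisfy.

  At \<open>x = 1\<close> the derivative term does not vanish. The same operator, applied with \<open>q = 0\<close> and
  shifted index, defines polynomials \<open>R\<^sub>n\<close>, and a Leibniz rule for binomial convolutions gives
  \<open>2 R\<^sub>n\<^sub>+\<^sub>1 = \<Sum> (n choose j) R\<^sub>j R\<^sub>n\<^sub>-\<^sub>j + [n = 0] (2x - 1)\<close> and
  \<open>S\<^sub>n\<^sub>+\<^sub>1 = q \<Sum> (n choose j) R\<^sub>j S\<^sub>n\<^sub>-\<^sub>j\<close>. At \<open>x = 1\<close> the exponential generating functions therefore
  satisfy \<open>R' = (1 + R\<^sup>2) / 2\<close> and \<open>G' = q R G\<close> with \<open>R(0) = G(0) = 1\<close>, whose unique solutions are
  \<open>R = cos z / (1 - sin z)\<close> and \<open>G = (1 - sin z)\<^sup>-\<^sup>q\<close>.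
\<close>

section \<open>Deleting letters\<close>

lemma del_letters_eq_next:
  assumes "p i \<le> m"
  shows "del_letters p m i = p i"
proof -
  have "(LEAST j. 0 < j \<and> (p ^^ j) i \<le> m) = 1"
    by (rule Least_equality) (use assms in auto)
  then show ?thesis by (simp add: del_letters_def)
qed

lemma return_after_step:
  fixes p :: "nat \<Rightarrow> nat"
  assumes "m < p z" "0 < j" "(p ^^ j) z \<le> m"
  obtains j' where "j = Suc j'" "0 < j'" "(p ^^ j') (p z) \<le> m"
proof -
  obtain j' where j': "j = Suc j'" using assms(2) gr0_conv_Suc by blast
  then have "(p ^^ j') (p z) \<le> m" using assms(3) by (simp add: funpow_swap1)
  moreover have "0 < j'" using calculation assms(1) by (cases j') auto
  ultimately show ?thesis using j' that by blast
qed

lemma del_letters_skip: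
  assumes "m < p i" "0 < j" "(p ^^ j) i \<le> m"
  shows "del_letters p m i = del_letters p m (p i)"
proof -
  obtain j' where j': "0 < j'" "(p ^^ j') (p i) \<le> m"
    using return_after_step[OF assms] .
  let ?Q = "\<lambda>j. 0 < j \<and> (p ^^ j) i \<le> m"
  let ?R = "\<lambda>j. 0 < j \<and> (p ^^ j) (p i) \<le> m"
  have Suc: "(p ^^ Suc k) i = (p ^^ k) (p i)" for k
    by (simp add: funpow_swap1)
  have shift: "\<forall>k. ?Q (Suc k) = ?R k"
  proof
    fix k show "?Q (Suc k) = ?R k"
      unfolding Suc using assms(1) by (cases k) auto
  qed
  have "Least ?Q = Suc (Least ?R)"
    by (rule Least_Suc2[of ?Q "Suc j'" ?R j']) (use j' shift Suc assms(1) in auto)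
  then show ?thesis unfolding del_letters_def by (simp add: funpow_swap1)
qed

lemma del_letters_all:
  assumes "p permutes {1..n}" "i \<in> {1..n}"
  shows "del_letters p n i = p i"
  using permutes_in_image[OF assms(1)] assms(2) by (intro del_letters_eq_next) auto

lemma no_double_exc_cong:
  assumes "\<And>i. i \<in> {1..m} \<Longrightarrow> s i = t i"
  shows "no_double_exc s m = no_double_exc t m"
  unfolding no_double_exc_def using assms by auto

lemma simsun2_iff:
  "p \<in> simsun2 n \<longleftrightarrow> p permutes {1..n} \<and> (\<forall>m\<le>n. no_double_exc (del_letters p m) m)"
proof -
  have "(\<forall>k\<in>{0..n}. P (n - k)) \<longleftrightarrow> (\<forall>m\<le>n. P m)" for P :: "nat \<Rightarrow> bool"
  proof (intro iffI allI impI ballI)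
    fix m assume all: "\<forall>k\<in>{0..n}. P (n - k)" and "m \<le> n"
    have "P (n - (n - m))" by (rule bspec[OF all]) simp
    then show "P m" using \<open>m \<le> n\<close> by simp
  qed simp
  from this[of "\<lambda>m. no_double_exc (del_letters p m) m"] show ?thesis
    unfolding simsun2_def by simp
qed

lemma simsun2_permutes: "p \<in> simsun2 n \<Longrightarrow> p permutes {1..n}"
  by (simp add: simsun2_iff)

lemma simsun2_no_double_exc:
  assumes "p \<in> simsun2 n"
  shows "no_double_exc p n"
proof -
  have "no_double_exc (del_letters p n) n"
    using assms by (simp add: simsun2_iff)
  moreover have "no_double_exc (del_letters p n) n = no_double_exc p n"
    by (rule no_double_exc_cong) (rule del_letters_all[OF simsun2_permutes[OF assms]])
  ultimately show ?thesis by simp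
qed

lemma finite_simsun2: "finite (simsun2 n)"
  using simsun2_permutes by (intro finite_subset[OF _ finite_permutations[of "{1..n}"]]) auto

lemma simsun2_0: "simsun2 0 = {id}"
  by (auto simp: simsun2_def no_double_exc_def permutes_empty)

section \<open>Removing and inserting the largest letter\<close>

text \<open>Removing the letter \<open>n + 1\<close> from the cycle decomposition sends its preimage to its
  image; inserting it right after \<open>i\<close> is the inverse operation.\<close>

definition remove_max :: "nat \<Rightarrow> (nat \<Rightarrow> nat) \<Rightarrow> nat \<Rightarrow> nat" where
  "remove_max n p = p \<circ> transpose (inv p (Suc n)) (Suc n)"

definition insert_max :: "nat \<Rightarrow> nat \<Rightarrow> (nat \<Rightarrow> nat) \<Rightarrow> nat \<Rightarrow> nat" where
  "insert_max n i p = p \<circ> transpose i (Suc n)"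

lemma remove_max_apply:
  assumes "p permutes {1..Suc n}"
  shows "remove_max n p z =
    (if z = Suc n then Suc n else if p z = Suc n then p (Suc n) else p z)"
proof -
  have pre: "inv p (Suc n) = z \<longleftrightarrow> p z = Suc n" for z
    using permutes_inv_eq[OF assms] by blast
  have "p (inv p (Suc n)) = Suc n"
    using permutes_inverses(1)[OF assms] .
  then show ?thesis
    using pre[of z] by (auto simp: remove_max_def)
qed

lemma remove_max_permutes:
  assumes p: "p permutes {1..Suc n}"
  shows "remove_max n p permutes {1..n}"
proof (rule permutes_superset)
  have "inv p (Suc n) \<in> {1..Suc n}"
    using permutes_in_image[OF permutes_inv[OF p]] by simp
  then show "remove_max n p permutes {1..Suc n}"
    unfolding remove_max_def by (intro permutes_compose[OF permutes_swap_id p]) auto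
  show "remove_max n p x = x" if "x \<in> {1..Suc n} - {1..n}" for x
    using that remove_max_apply[OF p] by auto
qed

lemma insert_max_remove_max: "insert_max n (inv p (Suc n)) (remove_max n p) = p"
  by (simp only: remove_max_def insert_max_def comp_assoc transpose_comp_involutory comp_id)

lemma insert_max_apply:
  assumes "p permutes {1..n}" "i \<in> {1..n}"
  shows "insert_max n i p z = (if z = i then Suc n else if z = Suc n then p i else p z)"
  using assms permutes_not_in[OF assms(1), of "Suc n"] by (auto simp: insert_max_def)

lemma insert_max_permutes:
  assumes "p permutes {1..n}" "i \<in> {1..n}"
  shows "insert_max n i p permutes {1..Suc n}"
  unfolding insert_max_def
  by (rule permutes_compose[OF permutes_swap_id permutes_subset[OF assms(1)]]) (use assms in auto)

lemma remove_max_self: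
  assumes "p permutes {1..n}"
  shows "remove_max n p = p"
proof -
  have "p (Suc n) = Suc n" using permutes_not_in[OF assms] by simp
  then have "inv p (Suc n) = Suc n"
    using permutes_inv_eq[OF permutes_subset[OF assms, of "{1..Suc n}"]] by auto
  then show ?thesis by (simp add: remove_max_def)
qed

lemma remove_max_insert_max:
  assumes "p permutes {1..n}" "i \<in> {1..n}"
  shows "remove_max n (insert_max n i p) = p"
proof -
  have "inv (insert_max n i p) (Suc n) = i"
    using assms insert_max_apply[OF assms]
    by (simp add: permutes_inv_eq[OF insert_max_permutes[OF assms]])
  then show ?thesis
    by (simp only: remove_max_def insert_max_def comp_assoc transpose_comp_involutory comp_id)
qed

lemma insert_max_inj:
  assumes p: "p permutes {1..n}"
  shows "inj_on (\<lambda>i. insert_max n i p) {1..n}" and "p \<notin> (\<lambda>i. insert_max n i p) ` {1..n}"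
proof -
  have pi: "p i \<in> {1..n}" if "i \<in> {1..n}" for i
    by (rule permutes_in_image[OF p, THEN iffD2, OF that])
  show "inj_on (\<lambda>i. insert_max n i p) {1..n}"
  proof (rule inj_onI, rule ccontr)
    fix i j assume i: "i \<in> {1..n}" and j: "j \<in> {1..n}" and "i \<noteq> j"
      and eq: "insert_max n i p = insert_max n j p"
    have "insert_max n i p i = Suc n" using insert_max_apply[OF p i] by simp
    moreover have "insert_max n j p i = p i" using insert_max_apply[OF p j] i \<open>i \<noteq> j\<close> by simp
    ultimately show False using eq pi[OF i] by auto
  qed
  show "p \<notin> (\<lambda>i. insert_max n i p) ` {1..n}"
  proof
    assume "p \<in> (\<lambda>i. insert_max n i p) ` {1..n}"
    then obtain i where i: "i \<in> {1..n}" and eq: "p = insert_max n i p" by blast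
    have "insert_max n i p (Suc n) = p i" by (simp add: insert_max_def)
    then show False using eq pi[OF i] permutes_not_in[OF p, of "Suc n"] by auto
  qed
qed

text \<open>\<open>remove_max n p i\<close> is \<open>p i\<close>, or \<open>p (p i)\<close> when \<open>p i = n + 1\<close>; in either case
  the letters skipped exceed \<open>m\<close>, so the first return of \<open>i\<close> below \<open>m + 1\<close> is unchanged.\<close>

lemma del_letters_remove_max_step:
  assumes p: "p permutes {1..Suc n}" and m: "m \<le> n" and i: "i \<in> {1..n}"
    and j: "0 < j" "(p ^^ j) i \<le> m"
  shows "del_letters p m i =
      (if remove_max n p i \<le> m then remove_max n p i else del_letters p m (remove_max n p i))
    \<and> (m < remove_max n p i \<longrightarrow> (\<exists>j'<j. 0 < j' \<and> (p ^^ j') (remove_max n p i) \<le> m))"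
proof (cases "p i \<le> m")
  case True
  then show ?thesis using remove_max_apply[OF p] i m del_letters_eq_next[of p i m] by auto
next
  case pi: False
  note q = remove_max_apply[OF p]
  obtain j1 where j1: "j = Suc j1" "0 < j1" "(p ^^ j1) (p i) \<le> m"
    using return_after_step pi j by (metis not_le)
  have skip: "del_letters p m i = del_letters p m (p i)"
    using del_letters_skip pi j by simp
  show ?thesis
  proof (cases "p i = Suc n")
    case False
    then show ?thesis using q i skip j1 pi by auto
  next
    case True
    have qi: "remove_max n p i = p (Suc n)" using q i True by auto
    show ?thesis
    proof (cases "p (Suc n) \<le> m")
      case True
      then show ?thesis using qi skip del_letters_eq_next[of p "Suc n" m] \<open>p i = Suc n\<close> by simp
    next
      case False
      obtain j2 where j2: "j1 = Suc j2" "0 < j2" "(p ^^ j2) (p (Suc n)) \<le> m"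
        using return_after_step[of m p "Suc n" j1] False j1 \<open>p i = Suc n\<close> by auto
      have "del_letters p m (Suc n) = del_letters p m (p (Suc n))"
        using del_letters_skip[of m p "Suc n" j1] False j1 \<open>p i = Suc n\<close> by auto
      moreover have "\<exists>j'<j. 0 < j' \<and> (p ^^ j') (p (Suc n)) \<le> m"
        using j1(1) j2 by (intro exI[of _ j2]) simp
      ultimately show ?thesis using qi skip False \<open>p i = Suc n\<close> by auto
    qed
  qed
qed

lemma del_letters_remove_max_of_return:
  assumes p: "p permutes {1..Suc n}" and m: "m \<le> n"
  shows "i \<in> {1..n} \<Longrightarrow> 0 < j \<Longrightarrow> (p ^^ j) i \<le> m \<Longrightarrow>
    (\<exists>j'>0. (remove_max n p ^^ j') i \<le> m) \<and> del_letters p m i = del_letters (remove_max n p) m i"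
proof (induction j arbitrary: i rule: less_induct)
  case (less j i)
  let ?q = "remove_max n p"
  note step = del_letters_remove_max_step[OF p m less.prems]
  have qi: "?q i \<in> {1..n}"
    using permutes_in_image[OF remove_max_permutes[OF p]] less.prems(1) by blast
  show ?case
  proof (cases "?q i \<le> m")
    case True
    have "(?q ^^ 1) i \<le> m" using True by simp
    then show ?thesis using step True del_letters_eq_next[of ?q i m] by auto
  next
    case False
    obtain j' where "j' < j" "0 < j'" "(p ^^ j') (?q i) \<le> m"
      using step False by auto
    then obtain k where k: "0 < k" "(?q ^^ k) (?q i) \<le> m"
      and eq: "del_letters p m (?q i) = del_letters ?q m (?q i)"
      using less.IH qi by blast
    have "(?q ^^ Suc k) i \<le> m" using k by (simp add: funpow_swap1)
    moreover have "del_letters ?q m i = del_letters ?q m (?q i)"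
      using del_letters_skip[of m ?q i "Suc k"] False \<open>(?q ^^ Suc k) i \<le> m\<close> by simp
    ultimately show ?thesis using step False eq by (metis zero_less_Suc)
  qed
qed

lemma del_letters_remove_max:
  assumes p: "p permutes {1..Suc n}" and m: "m \<le> n" and i: "i \<in> {1..m}"
  shows "del_letters p m i = del_letters (remove_max n p) m i"
proof -
  obtain k where k: "0 < k" "(p ^^ k) i = i"
    using permutation_self[of p i] p unfolding permutation_permutes by blast
  then show ?thesis
    using del_letters_remove_max_of_return[OF p m, of i k] i m by auto
qed

lemma simsun2_Suc_iff:
  "p \<in> simsun2 (Suc n) \<longleftrightarrow>
     p permutes {1..Suc n} \<and> no_double_exc p (Suc n) \<and> remove_max n p \<in> simsun2 n"
proof (cases "p permutes {1..Suc n}")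
  case True
  have top: "no_double_exc (del_letters p (Suc n)) (Suc n) = no_double_exc p (Suc n)"
    by (rule no_double_exc_cong) (rule del_letters_all[OF True])
  have lower: "no_double_exc (del_letters p m) m = no_double_exc (del_letters (remove_max n p) m) m"
    if "m \<le> n" for m
    by (rule no_double_exc_cong) (rule del_letters_remove_max[OF True that])
  show ?thesis
    using True top lower remove_max_permutes[OF True]
    unfolding simsun2_iff le_Suc_eq by auto
qed (simp add: simsun2_iff)

definition insertion_sites :: "nat \<Rightarrow> (nat \<Rightarrow> nat) \<Rightarrow> nat set" where
  "insertion_sites n p = {i \<in> {1..n}. \<not> (\<exists>y\<in>{1..n}. p y = i \<and> y < i)}"

lemma no_double_exc_Suc:
  assumes "p permutes {1..n}"
  shows "no_double_exc p (Suc n) \<longleftrightarrow> no_double_exc p n"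
  using permutes_not_in[OF assms, of "Suc n"] permutes_in_image[OF assms]
  unfolding no_double_exc_def by (auto simp: le_Suc_eq) fastforce+

text \<open>Inserting \<open>n + 1\<close> after \<open>i\<close> makes \<open>i\<close> an excedance without changing its preimage,
  and gives \<open>p i\<close> the preimage \<open>n + 1\<close>; so \<open>i\<close> is the only letter that can become a double
  excedance.\<close>

lemma no_double_exc_insert_max:
  assumes p: "p permutes {1..n}" and ndx: "no_double_exc p n" and i: "i \<in> {1..n}"
  shows "no_double_exc (insert_max n i p) (Suc n) \<longleftrightarrow> i \<in> insertion_sites n p"
proof -
  note ins = insert_max_apply[OF p i]
  have pi: "p i \<in> {1..n}" using permutes_in_image[OF p] i by blast
  have "(\<exists>x\<in>{1..Suc n}. \<exists>y\<in>{1..Suc n}. insert_max n i p y = x \<and> y < x \<and> x < insert_max n i p x)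
      \<longleftrightarrow> (\<exists>y\<in>{1..n}. p y = i \<and> y < i)"
  proof
    assume "\<exists>x\<in>{1..Suc n}. \<exists>y\<in>{1..Suc n}. insert_max n i p y = x \<and> y < x \<and> x < insert_max n i p x"
    then obtain x y where xy: "x \<in> {1..Suc n}" "y \<in> {1..Suc n}" "insert_max n i p y = x"
      "y < x" "x < insert_max n i p x" by blast
    have xN: "x \<noteq> Suc n" using xy(5) pi i ins[of "Suc n"] by auto
    have yN: "y \<noteq> i" "y \<noteq> Suc n" using xy ins xN by auto
    have "x = i"
    proof (rule ccontr)
      assume "x \<noteq> i"
      then have "p y = x" "x < p x" using xy ins xN yN by auto
      moreover have "x \<in> {1..n}" "y \<in> {1..n}" using xy xN yN by auto
      ultimately show False using ndx \<open>y < x\<close> unfolding no_double_exc_def by blast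
    qed
    then show "\<exists>y\<in>{1..n}. p y = i \<and> y < i" using xy ins yN by auto
  next
    assume "\<exists>y\<in>{1..n}. p y = i \<and> y < i"
    then obtain y where "y \<in> {1..n}" "p y = i" "y < i" by blast
    then show "\<exists>x\<in>{1..Suc n}. \<exists>y\<in>{1..Suc n}. insert_max n i p y = x \<and> y < x \<and> x < insert_max n i p x"
      using i ins by (intro bexI[of _ i] bexI[of _ y]) auto
  qed
  then show ?thesis using i unfolding no_double_exc_def insertion_sites_def by blast
qed

lemma simsun2_Suc_self:
  assumes pp: "pp \<in> simsun2 n"
  shows "pp \<in> simsun2 (Suc n)"
proof -
  have perm: "pp permutes {1..n}" by (rule simsun2_permutes[OF pp])
  show ?thesis
    using pp simsun2_no_double_exc[OF pp] remove_max_self[OF perm] permutes_subset[OF perm]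
    by (auto simp: simsun2_Suc_iff no_double_exc_Suc[OF perm])
qed

lemma simsun2_Suc_insert_max:
  assumes pp: "pp \<in> simsun2 n" and i: "i \<in> {1..n}"
  shows "insert_max n i pp \<in> simsun2 (Suc n) \<longleftrightarrow> i \<in> insertion_sites n pp"
proof -
  have perm: "pp permutes {1..n}" by (rule simsun2_permutes[OF pp])
  show ?thesis
    using pp insert_max_permutes[OF perm i] remove_max_insert_max[OF perm i]
      no_double_exc_insert_max[OF perm simsun2_no_double_exc[OF pp] i]
    by (auto simp: simsun2_Suc_iff)
qed

lemma simsun2_fiber:
  assumes pp: "pp \<in> simsun2 n"
  shows "{p \<in> simsun2 (Suc n). remove_max n p = pp} =
    insert pp ((\<lambda>i. insert_max n i pp) ` insertion_sites n pp)"
proof (intro equalityI subsetI)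
  fix p assume "p \<in> {p \<in> simsun2 (Suc n). remove_max n p = pp}"
  then have p: "p \<in> simsun2 (Suc n)" "remove_max n p = pp" by auto
  define i where "i = inv p (Suc n)"
  have p_eq: "p = insert_max n i pp"
    using insert_max_remove_max[of n p] p(2) by (simp add: i_def)
  have "i \<in> {1..Suc n}"
    using permutes_in_image[OF permutes_inv[OF simsun2_permutes[OF p(1)]]] by (simp add: i_def)
  then consider "i = Suc n" | "i \<in> {1..n}" by fastforce
  then show "p \<in> insert pp ((\<lambda>i. insert_max n i pp) ` insertion_sites n pp)"
  proof cases
    case 1
    then show ?thesis using p_eq by (simp add: insert_max_def)
  next
    case 2
    then show ?thesis using p_eq p(1) simsun2_Suc_insert_max[OF pp 2] by blast
  qed
next
  fix p assume "p \<in> insert pp ((\<lambda>i. insert_max n i pp) ` insertion_sites n pp)"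
  moreover have "insertion_sites n pp \<subseteq> {1..n}"
    unfolding insertion_sites_def by blast
  ultimately show "p \<in> {p \<in> simsun2 (Suc n). remove_max n p = pp}"
    using simsun2_Suc_self[OF pp] remove_max_self[OF simsun2_permutes[OF pp]]
      simsun2_Suc_insert_max[OF pp] remove_max_insert_max[OF simsun2_permutes[OF pp]]
    by auto
qed

lemma exc_Suc_fixed:
  assumes "p permutes {1..n}"
  shows "exc p (Suc n) = exc p n"
proof -
  have "{i \<in> {1..Suc n}. i < p i} = {i \<in> {1..n}. i < p i}"
    using permutes_not_in[OF assms, of "Suc n"] by (auto simp: le_Suc_eq)
  then show ?thesis by (simp add: exc_def)
qed

lemma exc_insert_max:
  assumes p: "p permutes {1..n}" and i: "i \<in> {1..n}"
  shows "exc (insert_max n i p) (Suc n) = exc p n + (if i < p i then 0 else 1)"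
proof -
  note ins = insert_max_apply[OF p i]
  have "p i \<le> n" using permutes_in_image[OF p] i by auto
  then have "{z \<in> {1..Suc n}. z < insert_max n i p z} = insert i {z \<in> {1..n}. z < p z}"
    using i ins by (auto simp: le_Suc_eq)
  then show ?thesis using i by (simp add: exc_def card_insert_if)
qed

lemma insertion_sites_excedances:
  assumes "no_double_exc p n"
  shows "{i \<in> insertion_sites n p. i < p i} = {i \<in> {1..n}. i < p i}"
  using assms unfolding insertion_sites_def no_double_exc_def by blast

lemma card_insertion_sites:
  assumes p: "p permutes {1..n}"
  shows "card (insertion_sites n p) + exc p n = n"
proof -
  let ?E = "{i \<in> {1..n}. i < p i}"
  have sites: "insertion_sites n p \<subseteq> {1..n}"
    unfolding insertion_sites_def by blast
  have blocked: "{1..n} - insertion_sites n p = p ` ?E"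
  proof (intro equalityI subsetI)
    fix i assume "i \<in> {1..n} - insertion_sites n p"
    then obtain y where "y \<in> {1..n}" "p y = i" "y < i"
      unfolding insertion_sites_def by blast
    then show "i \<in> p ` ?E" by force
  next
    fix i assume "i \<in> p ` ?E"
    then obtain y where y: "y \<in> ?E" "i = p y" by blast
    then have "i \<in> {1..n}" using permutes_in_image[OF p] by auto
    then show "i \<in> {1..n} - insertion_sites n p"
      using y unfolding insertion_sites_def by auto
  qed
  have "card (p ` ?E) = card ?E"
    by (rule card_image) (rule inj_on_subset[OF permutes_inj_on[OF p]], auto)
  then have "n - card (insertion_sites n p) = exc p n"
    using card_Diff_subset[OF finite_subset[OF sites] sites] unfolding blocked exc_def by simp
  moreover have "card (insertion_sites n p) \<le> n"
    using card_mono[OF _ sites] by simp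
  ultimately show ?thesis by simp
qed

lemma cyc_eq_card_orbits:
  assumes "p permutes {1..n}"
  shows "cyc p n = card (orbit p ` {1..n})"
proof -
  have "permutation p" using permutes_imp_permutation[OF _ assms] by simp
  then show ?thesis by (simp add: cyc_def orbit_altdef_permutation)
qed

lemma orbit_remove_max_subset:
  assumes p: "p permutes {1..Suc n}" and z: "z \<in> {1..n}"
  shows "orbit (remove_max n p) z \<subseteq> orbit p z"
proof
  let ?q = "remove_max n p"
  have q_in_p: "?q y \<in> orbit p z" if "p y \<in> orbit p z" "y \<noteq> Suc n" for y
  proof (cases "p y = Suc n")
    case True
    then have "?q y = p (p y)" using remove_max_apply[OF p, of y] that(2) by simp
    then show ?thesis using orbit.step[OF that(1)] by simp
  next
    case False
    then show ?thesis using remove_max_apply[OF p, of y] that by simp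
  qed
  have q_orbit: "orbit ?q z \<subseteq> {1..n}"
    by (rule permutes_orbit_subset[OF remove_max_permutes[OF p] z])
  fix y assume "y \<in> orbit ?q z"
  then show "y \<in> orbit p z"
  proof induction
    case base
    show ?case using q_in_p[OF orbit.base] z by simp
  next
    case (step y)
    then show ?case using q_in_p[OF orbit.step[OF step.IH]] q_orbit by auto
  qed
qed

text \<open>Along the orbit of \<open>p\<close>, the letter \<open>n + 1\<close> is tracked by its preimage, which has
  the same successor in \<open>remove_max n p\<close> as \<open>n + 1\<close> has in \<open>p\<close>.\<close>

lemma orbit_remove_max_step:
  assumes p: "p permutes {1..Suc n}" and z: "z \<in> {1..n}"
    and y: "(if y = Suc n then inv p (Suc n) else y) \<in> orbit (remove_max n p) z"
  shows "(if p y = Suc n then inv p (Suc n) else p y) \<in> orbit (remove_max n p) z"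
proof -
  let ?q = "remove_max n p" and ?i = "inv p (Suc n)"
  note q = remove_max_apply[OF p]
  have q_orbit: "orbit ?q z \<subseteq> {1..n}"
    by (rule permutes_orbit_subset[OF remove_max_permutes[OF p] z])
  have pre: "p y = Suc n \<Longrightarrow> y = ?i" for y
    using permutes_inv_eq[OF p, THEN iffD2, of y "Suc n"] by simp
  show ?thesis
  proof (cases "y = Suc n")
    case True
    then have iq: "?i \<in> orbit ?q z" "?i \<noteq> Suc n" using y q_orbit by auto
    have "?q ?i = p y"
      using q[of ?i] permutes_inverses(1)[OF p] True iq(2) by simp
    then have "p y \<in> orbit ?q z" using orbit.step[OF iq(1)] by simp
    moreover have "p y \<noteq> Suc n" using pre[of y] True iq(2) by auto
    ultimately show ?thesis by simp
  next
    case False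
    then have y: "y \<in> orbit ?q z" using y by simp
    show ?thesis
    proof (cases "p y = Suc n")
      case True
      then show ?thesis using y pre[OF True] by simp
    next
      case pyN: False
      then have "?q y = p y" using q[of y] False by simp
      then show ?thesis using orbit.step[OF y] pyN by simp
    qed
  qed
qed

lemma orbit_remove_max_supset:
  assumes p: "p permutes {1..Suc n}" and z: "z \<in> {1..n}" and y: "y \<in> orbit p z"
  shows "(if y = Suc n then inv p (Suc n) else y) \<in> orbit (remove_max n p) z"
  using y
proof induction
  case base
  have "z \<in> orbit (remove_max n p) z"
    by (rule permutation_self_in_orbit[OF permutes_imp_permutation[OF _ remove_max_permutes[OF p]]]) simp
  then show ?case using orbit_remove_max_step[OF p z, of z] z by simp
next
  case (step y)
  then show ?case using orbit_remove_max_step[OF p z, of y] by simp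
qed

lemma orbit_remove_max:
  assumes p: "p permutes {1..Suc n}" and z: "z \<in> {1..n}"
  shows "orbit (remove_max n p) z = orbit p z - {Suc n}"
proof (intro equalityI subsetI)
  fix y assume "y \<in> orbit (remove_max n p) z"
  then show "y \<in> orbit p z - {Suc n}"
    using orbit_remove_max_subset[OF p z] permutes_orbit_subset[OF remove_max_permutes[OF p] z]
    by auto
next
  fix y assume "y \<in> orbit p z - {Suc n}"
  then show "y \<in> orbit (remove_max n p) z"
    using orbit_remove_max_supset[OF p z, of y] by simp
qed

lemma cyc_remove_max:
  assumes p: "p permutes {1..Suc n}" and moved: "p (Suc n) \<noteq> Suc n"
  shows "cyc p (Suc n) = cyc (remove_max n p) n"
proof -
  have perm: "permutation p" using permutes_imp_permutation[OF _ p] by simp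
  have "p (Suc n) \<in> {1..n}" using permutes_in_image[OF p, of "Suc n"] moved by auto
  then have "orbit p (p (Suc n)) \<in> orbit p ` {1..n}" by (rule imageI)
  then have "orbit p (Suc n) \<in> orbit p ` {1..n}"
    unfolding permutation_orbit_step[OF perm] .
  moreover have "{1..Suc n} = insert (Suc n) {1..n}" by (rule atLeastAtMostSuc_conv) simp
  ultimately have all: "orbit p ` {1..Suc n} = orbit p ` {1..n}"
    by (simp only: image_insert insert_absorb)
  have "inj_on (\<lambda>X. X - {Suc n}) (orbit p ` {1..n})"
  proof (rule inj_onI, clarify)
    fix a b assume ab: "a \<in> {1..n}" "b \<in> {1..n}" "orbit p a - {Suc n} = orbit p b - {Suc n}"
    have "a \<in> orbit p a - {Suc n}"
      using permutation_self_in_orbit[OF perm, of a] ab(1) by simp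
    then have "a \<in> orbit p b" unfolding ab(3) by simp
    then show "orbit p a = orbit p b"
      by (rule orbit_cyclic_eq3[OF cyclic_on_orbit'[OF perm]])
  qed
  then have "card (orbit p ` {1..n}) = card ((\<lambda>X. X - {Suc n}) ` orbit p ` {1..n})"
    by (rule card_image[symmetric])
  also have "(\<lambda>X. X - {Suc n}) ` orbit p ` {1..n} = orbit (remove_max n p) ` {1..n}"
    unfolding image_image by (rule image_cong[OF refl orbit_remove_max[OF p, symmetric]])
  finally show ?thesis
    unfolding cyc_eq_card_orbits[OF p] cyc_eq_card_orbits[OF remove_max_permutes[OF p]] all .
qed

lemma cyc_insert_max:
  assumes p: "p permutes {1..n}" and i: "i \<in> {1..n}"
  shows "cyc (insert_max n i p) (Suc n) = cyc p n"
proof -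
  have "insert_max n i p (Suc n) = p i" by (simp add: insert_max_def)
  moreover have "p i \<in> {1..n}" by (rule permutes_in_image[OF p, THEN iffD2, OF i])
  ultimately have moved: "insert_max n i p (Suc n) \<noteq> Suc n" by auto
  have "cyc (insert_max n i p) (Suc n) = cyc (remove_max n (insert_max n i p)) n"
    by (rule cyc_remove_max[OF insert_max_permutes[OF p i] moved])
  then show ?thesis unfolding remove_max_insert_max[OF p i] .
qed

lemma cyc_Suc_fixed:
  assumes p: "p permutes {1..n}"
  shows "cyc p (Suc n) = Suc (cyc p n)"
proof -
  have pS: "p permutes {1..Suc n}" by (rule permutes_subset[OF p]) auto
  have "orbit p (Suc n) = {Suc n}"
    using permutes_not_in[OF p, of "Suc n"] by (simp add: orbit_eq_singleton_iff)
  moreover have fresh: "{Suc n} \<notin> orbit p ` {1..n}"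
  proof
    assume "{Suc n} \<in> orbit p ` {1..n}"
    then obtain z where "z \<in> {1..n}" "orbit p z = {Suc n}" by auto
    then show False using permutes_orbit_subset[OF p, of z] by auto
  qed
  moreover have "{1..Suc n} = insert (Suc n) {1..n}" by (rule atLeastAtMostSuc_conv) simp
  ultimately have "card (orbit p ` {1..Suc n}) = card (insert {Suc n} (orbit p ` {1..n}))"
    by (simp only: image_insert)
  also have "\<dots> = Suc (card (orbit p ` {1..n}))"
    using fresh by (simp add: card_insert_disjoint)
  finally show ?thesis
    unfolding cyc_eq_card_orbits[OF p] cyc_eq_card_orbits[OF pS] .
qed

section \<open>The recurrence\<close>

lemma pderiv_sum: "pderiv (sum f A) = (\<Sum>x\<in>A. pderiv (f x))"
  by (induction A rule: infinite_finite_induct) (simp_all add: pderiv_add)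

definition insertion_operator :: "'a::idom \<Rightarrow> nat \<Rightarrow> 'a poly \<Rightarrow> 'a poly" where
  "insertion_operator c n f = [:c, of_nat n:] * f + [:0, 1, -2:] * pderiv f"

lemma insertion_operator_monom:
  "insertion_operator q n (monom c e) =
    monom (q * c) e + monom (of_nat e * c) e + monom ((of_nat n - 2 * of_nat e) * c) (Suc e)"
proof -
  have D: "[:0, 1, -2:] = monom 1 1 + monom (-2) 2"
    by (simp add: poly_eq_iff coeff_pCons coeff_monom split: nat.split)
  have D_part: "[:0, 1, -2:] * pderiv (monom c e) = monom (of_nat e * c) e - monom (2 * of_nat e * c) (Suc e)"
    unfolding D pderiv_monom distrib_right mult_monom
    by (cases e) (simp_all add: poly_eq_iff coeff_monom)
  have lin_part: "[:q, of_nat n:] * monom c e = monom (q * c) e + monom (of_nat n * c) (Suc e)"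
    by (simp add: mult_pCons_left smult_monom monom_Suc)
  show ?thesis
    unfolding insertion_operator_def D_part lin_part
    by (simp add: poly_eq_iff coeff_monom algebra_simps)
qed

definition simsun_poly :: "'a::comm_ring_1 \<Rightarrow> nat \<Rightarrow> 'a poly" where
  "simsun_poly q n = (\<Sum>p\<in>simsun2 n. monom (q ^ cyc p n) (exc p n))"

lemma poly_simsun_poly: "poly (simsun_poly q n) x = S_poly n x q"
  by (simp add: simsun_poly_def S_poly_def poly_sum poly_monom mult.commute)

lemma simsun_poly_0: "simsun_poly q 0 = 1"
  by (simp add: simsun_poly_def simsun2_0 exc_def cyc_def monom_0 one_pCons)

lemma sum_insertion_sites_monom:
  fixes c :: "'a::comm_ring_1"
  assumes pp: "pp \<in> simsun2 n"
  shows "(\<Sum>i\<in>insertion_sites n pp. monom c (if i < pp i then exc pp n else Suc (exc pp n))) =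
    monom (of_nat (exc pp n) * c) (exc pp n) + monom ((of_nat n - 2 * of_nat (exc pp n)) * c) (Suc (exc pp n))"
proof -
  define e A where "e = exc pp n" and "A = insertion_sites n pp"
  have A: "finite A" unfolding A_def insertion_sites_def by auto
  let ?E = "A \<inter> {i. i < pp i}" and ?N = "A \<inter> - {i. i < pp i}"
  have "(\<Sum>i\<in>A. monom c (if i < pp i then e else Suc e)) =
      (\<Sum>i\<in>A. if i < pp i then monom c e else monom c (Suc e))"
    by (rule sum.cong) auto
  also have "\<dots> = (\<Sum>i\<in>?E. monom c e) + (\<Sum>i\<in>?N. monom c (Suc e))"
    by (rule sum.If_cases[OF A])
  also have "\<dots> = monom (of_nat (card ?E) * c) e + monom (of_nat (card ?N) * c) (Suc e)"
    by (simp add: of_nat_monom mult_monom)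
  finally have split: "(\<Sum>i\<in>A. monom c (if i < pp i then e else Suc e)) =
      monom (of_nat (card ?E) * c) e + monom (of_nat (card ?N) * c) (Suc e)" .
  have "?E = {i \<in> {1..n}. i < pp i}"
    using insertion_sites_excedances[OF simsun2_no_double_exc[OF pp]] unfolding A_def by blast
  then have cardE: "card ?E = e" by (simp add: e_def exc_def)
  have "card A = card ?E + card ?N"
    using A by (subst card_Un_disjoint[symmetric]) (auto intro: arg_cong[where f = card])
  then have "card ?N + 2 * e = n"
    using card_insertion_sites[OF simsun2_permutes[OF pp]] cardE unfolding A_def e_def by simp
  then have "of_nat (card ?N) = (of_nat n - 2 * of_nat e :: 'a)"
    by (metis add_diff_cancel_right' of_nat_add of_nat_mult of_nat_numeral)
  then show ?thesis using split cardE unfolding A_def e_def by simp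
qed

lemma simsun2_fiber_sum:
  fixes q :: "'a::idom"
  assumes pp: "pp \<in> simsun2 n"
  shows "(\<Sum>p\<in>{p \<in> simsun2 (Suc n). remove_max n p = pp}. monom (q ^ cyc p (Suc n)) (exc p (Suc n)))
    = insertion_operator q n (monom (q ^ cyc pp n) (exc pp n))"
proof -
  have perm: "pp permutes {1..n}" by (rule simsun2_permutes[OF pp])
  define c e A where "c = q ^ cyc pp n" and "e = exc pp n" and "A = insertion_sites n pp"
  have A: "A \<subseteq> {1..n}" "finite A" unfolding A_def insertion_sites_def by auto
  let ?f = "\<lambda>p. monom (q ^ cyc p (Suc n)) (exc p (Suc n))"
  have notin: "pp \<notin> (\<lambda>i. insert_max n i pp) ` A"
    using insert_max_inj(2)[OF perm] A(1) by blast
  have inj: "inj_on (\<lambda>i. insert_max n i pp) A"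
    using inj_on_subset[OF insert_max_inj(1)[OF perm] A(1)] .
  have "(\<Sum>p\<in>{p \<in> simsun2 (Suc n). remove_max n p = pp}. ?f p)
      = ?f pp + (\<Sum>i\<in>A. ?f (insert_max n i pp))"
    unfolding simsun2_fiber[OF pp] A_def[symmetric]
    using A(2) notin by (simp add: sum.reindex[OF inj])
  also have "?f pp = monom (q * c) e"
    by (simp add: cyc_Suc_fixed[OF perm] exc_Suc_fixed[OF perm] c_def e_def)
  also have "(\<Sum>i\<in>A. ?f (insert_max n i pp)) = (\<Sum>i\<in>A. monom c (if i < pp i then e else Suc e))"
    using A(1) by (intro sum.cong) (auto simp: cyc_insert_max[OF perm] exc_insert_max[OF perm] c_def e_def)
  also have "\<dots> = monom (of_nat e * c) e + monom ((of_nat n - 2 * of_nat e) * c) (Suc e)"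
    unfolding A_def e_def by (rule sum_insertion_sites_monom[OF pp])
  finally show ?thesis
    unfolding insertion_operator_monom c_def[symmetric] e_def[symmetric] by (simp add: algebra_simps)
qed

lemma simsun_poly_Suc: "simsun_poly q (Suc n) = insertion_operator q n (simsun_poly q n)"
proof -
  have "remove_max n ` simsun2 (Suc n) \<subseteq> simsun2 n"
    by (auto simp: simsun2_Suc_iff)
  then have "simsun_poly q (Suc n) = (\<Sum>pp\<in>simsun2 n.
      \<Sum>p\<in>{p \<in> simsun2 (Suc n). remove_max n p = pp}. monom (q ^ cyc p (Suc n)) (exc p (Suc n)))"
    unfolding simsun_poly_def by (rule sum.group[OF finite_simsun2 finite_simsun2, symmetric])
  also have "\<dots> = (\<Sum>pp\<in>simsun2 n. insertion_operator q n (monom (q ^ cyc pp n) (exc pp n)))"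
    by (rule sum.cong[OF refl simsun2_fiber_sum])
  also have "\<dots> = insertion_operator q n (simsun_poly q n)"
    by (simp add: simsun_poly_def insertion_operator_def pderiv_sum sum.distrib sum_distrib_left)
  finally show ?thesis .
qed

section \<open>The case \<open>q = -1\<close>\<close>

lemma poly_insertion_operator:
  "poly (insertion_operator c n f) x = (c + of_nat n * x) * poly f x + (x - 2 * x^2) * poly (pderiv f) x"
  by (simp add: insertion_operator_def algebra_simps power2_eq_square)

lemma poly_pderiv_power_linear:
  fixes x :: "'a::idom"
  shows "(x - 2 * x^2) * poly (pderiv ([:1, -2:] ^ m)) x = - 2 * of_nat m * x * (1 - 2 * x) ^ m"
proof (cases m)
  case (Suc k)
  define y where "y = (1 - 2 * x) ^ k"
  have d: "poly (pderiv ([:1, -2:] ^ m)) x = - 2 * of_nat m * y"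
    unfolding Suc pderiv_power_Suc y_def by (simp add: pderiv_pCons poly_power algebra_simps)
  have pw: "(1 - 2 * x) ^ m = (1 - 2 * x) * y" by (simp add: Suc y_def)
  show ?thesis unfolding d pw by (simp add: algebra_simps power2_eq_square)
qed simp

lemma insertion_operator_odd:
  "insertion_operator (-1) (2 * m + 1) (- ([:1, -2:] ^ m)) =
     [:1, -1:] * [:1, -2 :: 'a::{idom, ring_char_0}:] ^ m"
proof (rule poly_eq_poly_eq_iff[THEN iffD1, OF ext])
  fix x :: 'a
  show "poly (insertion_operator (-1) (2 * m + 1) (- ([:1, -2:] ^ m))) x =
      poly ([:1, -1:] * [:1, -2:] ^ m) x"
    unfolding poly_insertion_operator pderiv_minus poly_minus mult_minus_right
      poly_pderiv_power_linear
    by (simp add: poly_power algebra_simps)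
qed

lemma insertion_operator_even:
  "insertion_operator (-1) (2 * m + 2) ([:1, -1:] * [:1, -2:] ^ m) =
     - ([:1, -2 :: 'a::{idom, ring_char_0}:] ^ Suc m)"
proof (rule poly_eq_poly_eq_iff[THEN iffD1, OF ext])
  fix x :: 'a
  have "(x - 2 * x^2) * poly (pderiv ([:1, -1:] * [:1, -2:] ^ m)) x =
      (1 - x) * ((x - 2 * x^2) * poly (pderiv ([:1, -2:] ^ m)) x) - (x - 2 * x^2) * (1 - 2 * x) ^ m"
    unfolding pderiv_mult poly_add poly_mult by (simp add: pderiv_pCons poly_power algebra_simps)
  then show "poly (insertion_operator (-1) (2 * m + 2) ([:1, -1:] * [:1, -2:] ^ m)) x =
      poly (- ([:1, -2:] ^ Suc m)) x"
    unfolding poly_insertion_operator poly_pderiv_power_linear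
    by (simp add: poly_power algebra_simps power2_eq_square)
qed

lemma insertion_operator_minus_one:
  fixes g :: "nat \<Rightarrow> 'a::{idom, ring_char_0} poly"
  assumes g0: "g 0 = 1" and g: "\<And>n. g (Suc n) = insertion_operator (-1) n (g n)"
  shows "g (2 * m + 1) = - ([:1, -2:] ^ m) \<and> g (2 * m + 2) = [:1, -1:] * [:1, -2:] ^ m"
proof (induction m)
  case 0
  have "g 1 = - ([:1, -2:] ^ 0)"
    using g[of 0] g0 by (simp add: insertion_operator_def one_pCons)
  moreover have "g 2 = insertion_operator (-1) (2 * 0 + 1) (g 1)"
    using g[of 1] by (simp add: numeral_2_eq_2)
  ultimately have "g 2 = [:1, -1:] * [:1, -2:] ^ 0"
    using insertion_operator_odd[of 0] by simp
  moreover note \<open>g 1 = - ([:1, -2:] ^ 0)\<close>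
  ultimately show ?case by (simp add: numeral_2_eq_2)
next
  case (Suc m)
  have "g (2 * Suc m + 1) = insertion_operator (-1) (2 * m + 2) (g (2 * m + 2))"
    using g[of "2 * m + 2"] by simp
  then have odd: "g (2 * Suc m + 1) = - ([:1, -2:] ^ Suc m)"
    using Suc.IH insertion_operator_even[of m] by simp
  have "g (2 * Suc m + 2) = insertion_operator (-1) (2 * Suc m + 1) (g (2 * Suc m + 1))"
    using g[of "2 * Suc m + 1"] by simp
  then show ?case
    using odd insertion_operator_odd[of "Suc m"] by simp
qed

section \<open>Binomial convolutions and the Riccati polynomials\<close>

definition binomial_conv :: "(nat \<Rightarrow> 'a::comm_semiring_1) \<Rightarrow> (nat \<Rightarrow> 'a) \<Rightarrow> nat \<Rightarrow> 'a" where
  "binomial_conv a b n = (\<Sum>j\<le>n. of_nat (n choose j) * (a j * b (n - j)))"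

lemma poly_binomial_conv:
  "poly (binomial_conv a b n) x = binomial_conv (\<lambda>j. poly (a j) x) (\<lambda>j. poly (b j) x) n"
  by (simp add: binomial_conv_def poly_sum)

lemma binomial_conv_Suc:
  fixes a b :: "nat \<Rightarrow> 'a::comm_semiring_1"
  shows "binomial_conv a b (Suc n) =
    (\<Sum>j\<le>n. of_nat (n choose j) * (a (Suc j) * b (n - j) + a j * b (Suc n - j)))"
proof -
  define g where "g j = of_nat (n choose j) * (a j * b (Suc n - j))" for j
  have "(\<Sum>j\<le>Suc n. g j) = g 0 + (\<Sum>j\<le>n. g (Suc j))" by (rule sum.atMost_Suc_shift)
  moreover have "(\<Sum>j\<le>Suc n. g j) = (\<Sum>j\<le>n. g j)" by (simp add: g_def binomial_eq_0)
  ultimately have g_shift: "(\<Sum>j\<le>n. g j) = g 0 + (\<Sum>j\<le>n. g (Suc j))" by simp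
  have "(\<Sum>j\<le>n. of_nat (n choose j) * (a (Suc j) * b (n - j) + a j * b (Suc n - j)))
      = (\<Sum>j\<le>n. of_nat (n choose j) * (a (Suc j) * b (n - j))) + (\<Sum>j\<le>n. g j)"
    by (simp add: g_def distrib_left sum.distrib)
  also have "\<dots> = a 0 * b (Suc n) +
      (\<Sum>j\<le>n. (of_nat (n choose j) + of_nat (n choose Suc j)) * (a (Suc j) * b (n - j)))"
    unfolding g_shift by (simp add: g_def distrib_right sum.distrib add_ac)
  also have "\<dots> = binomial_conv a b (Suc n)"
    unfolding binomial_conv_def by (subst sum.atMost_Suc_shift) simp
  finally show ?thesis by simp
qed

lemma binomial_conv_pderiv:
  fixes a b A B :: "nat \<Rightarrow> 'a::idom poly"
  assumes a: "\<And>j. d * pderiv (a j) = a (Suc j) - A j * a j"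
    and b: "\<And>k. d * pderiv (b k) = b (Suc k) - B k * b k"
    and K: "\<And>j. j \<le> n \<Longrightarrow> A j + B (n - j) = K"
  shows "d * pderiv (binomial_conv a b n) = binomial_conv a b (Suc n) - K * binomial_conv a b n"
proof -
  have summand: "d * pderiv (of_nat (n choose j) * (a j * b (n - j))) =
      of_nat (n choose j) * (a (Suc j) * b (n - j) + a j * b (Suc n - j))
      - K * (of_nat (n choose j) * (a j * b (n - j)))" if j: "j \<le> n" for j
  proof -
    have "Suc (n - j) = Suc n - j" using j by simp
    have "d * pderiv (of_nat (n choose j) * (a j * b (n - j))) =
        of_nat (n choose j) * (a j * (d * pderiv (b (n - j))) + b (n - j) * (d * pderiv (a j)))"
      by (simp add: pderiv_mult algebra_simps)
    also have "\<dots> = of_nat (n choose j) * (a j * (b (Suc n - j) - B (n - j) * b (n - j))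
          + b (n - j) * (a (Suc j) - A j * a j))"
      unfolding a b \<open>Suc (n - j) = Suc n - j\<close> ..
    also have "\<dots> = of_nat (n choose j) * (a (Suc j) * b (n - j) + a j * b (Suc n - j))
        - (A j + B (n - j)) * (of_nat (n choose j) * (a j * b (n - j)))"
      by (simp add: algebra_simps)
    finally show ?thesis unfolding K[OF j] .
  qed
  have "d * pderiv (binomial_conv a b n) =
      (\<Sum>j\<le>n. d * pderiv (of_nat (n choose j) * (a j * b (n - j))))"
    by (simp add: binomial_conv_def pderiv_sum sum_distrib_left)
  also have "\<dots> = (\<Sum>j\<le>n. of_nat (n choose j) * (a (Suc j) * b (n - j) + a j * b (Suc n - j)))
      - K * binomial_conv a b n"
    by (simp add: summand binomial_conv_def sum_subtractf sum_distrib_left)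
  also have "\<dots> = binomial_conv a b (Suc n) - K * binomial_conv a b n"
    by (simp only: binomial_conv_Suc)
  finally show ?thesis .
qed

primrec riccati_poly :: "nat \<Rightarrow> 'a::idom poly" where
  "riccati_poly 0 = 1"
| "riccati_poly (Suc n) = insertion_operator 0 (Suc n) (riccati_poly n)"

lemma riccati_poly_pderiv:
  "[:0, 1, -2:] * pderiv (riccati_poly j) = riccati_poly (Suc j) - [:0, of_nat (Suc j):] * riccati_poly j"
  by (simp only: riccati_poly.simps(2) insertion_operator_def add_diff_cancel_left')

lemma pderiv_mult_2: "pderiv (2 * f) = 2 * pderiv f"
  by (simp add: mult_2 pderiv_add)

lemma riccati_poly_quadratic:
  "2 * riccati_poly (Suc n) =
     binomial_conv riccati_poly riccati_poly n + (if n = 0 then [:-1, 2:] else (0 :: 'a::idom poly))"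
proof (induction n)
  case 0
  have "2 * [:0, 1:] = 1 + [:-1, 2 :: 'a:]"
    by (simp add: numeral_poly one_pCons)
  then show ?case by (simp add: binomial_conv_def insertion_operator_def)
next
  case (Suc n)
  let ?R = "riccati_poly :: nat \<Rightarrow> 'a poly"
  let ?C = "binomial_conv ?R ?R" and ?c = "if n = 0 then [:-1, 2:] else (0 :: 'a poly)"
  let ?X = "[:0, of_nat (Suc (Suc n)):] :: 'a poly"
  have K: "[:0, of_nat (Suc j):] + [:0, of_nat (Suc (n - j)):] = ?X" if "j \<le> n" for j
    using that by (simp flip: of_nat_add)
  have conv: "[:0, 1, -2:] * pderiv (?C n) = ?C (Suc n) - ?X * ?C n"
    by (rule binomial_conv_pderiv[OF riccati_poly_pderiv riccati_poly_pderiv K])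
  have extra: "?X * ?c + [:0, 1, -2:] * pderiv ?c = 0"
    by (simp add: pderiv_pCons)
  have "2 * ?R (Suc (Suc n)) = ?X * (2 * ?R (Suc n)) + [:0, 1, -2:] * pderiv (2 * ?R (Suc n))"
    unfolding riccati_poly.simps(2)[of "Suc n"] insertion_operator_def pderiv_mult_2
    by (simp add: algebra_simps del: riccati_poly.simps)
  also have "\<dots> = (?X * ?C n + [:0, 1, -2:] * pderiv (?C n)) + (?X * ?c + [:0, 1, -2:] * pderiv ?c)"
    unfolding Suc.IH by (simp add: pderiv_add algebra_simps del: riccati_poly.simps)
  also have "\<dots> = ?C (Suc n)"
    unfolding conv extra by simp
  finally show ?case by simp
qed

lemma insertion_operator_binomial_conv:
  fixes g :: "nat \<Rightarrow> 'a::idom poly"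
  assumes g0: "g 0 = 1" and g: "\<And>n. g (Suc n) = insertion_operator q n (g n)"
  shows "g (Suc n) = [:q:] * binomial_conv riccati_poly g n"
proof (induction n)
  case 0
  show ?case by (simp add: g g0 binomial_conv_def insertion_operator_def)
next
  case (Suc n)
  let ?C = "binomial_conv riccati_poly g"
  have K: "[:0, of_nat (Suc j):] + [:q, of_nat (n - j):] = [:q, of_nat (Suc n):]"
    if "j \<le> n" for j
    using that by (simp flip: of_nat_add)
  have conv: "[:0, 1, -2:] * pderiv (?C n) = ?C (Suc n) - [:q, of_nat (Suc n):] * ?C n"
  proof (rule binomial_conv_pderiv[OF riccati_poly_pderiv _ K])
    show "[:0, 1, -2:] * pderiv (g k) = g (Suc k) - [:q, of_nat k:] * g k" for k
      by (simp only: g insertion_operator_def add_diff_cancel_left')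
  qed
  have "g (Suc (Suc n)) = [:q, of_nat (Suc n):] * ([:q:] * ?C n) + [:0, 1, -2:] * pderiv ([:q:] * ?C n)"
    unfolding g[of "Suc n"] Suc.IH insertion_operator_def ..
  also have "\<dots> = [:q:] * ([:q, of_nat (Suc n):] * ?C n + [:0, 1, -2:] * pderiv (?C n))"
    by (simp add: pderiv_mult pderiv_smult algebra_simps)
  also have "\<dots> = [:q:] * ?C (Suc n)"
    unfolding conv by (simp only: add_diff_eq add_diff_cancel_left')
  finally show ?case .
qed

section \<open>Exponential generating functions\<close>

unbundle fps_syntax

definition egf :: "(nat \<Rightarrow> 'a::field_char_0) \<Rightarrow> 'a fps" where
  "egf a = Abs_fps (\<lambda>n. a n / fact n)"

lemma egf_nth [simp]: "egf a $ n = a n / fact n"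
  by (simp add: egf_def)

lemma fps_deriv_egf_nth: "fps_deriv (egf a) $ n = a (Suc n) / fact n"
proof -
  have "of_nat (Suc n) * (a (Suc n) / fact (Suc n)) =
      of_nat (Suc n) * a (Suc n) / (of_nat (Suc n) * (fact n :: 'a))"
    by (simp only: fact_Suc times_divide_eq_right)
  also have "\<dots> = a (Suc n) / fact n"
    by (rule mult_divide_mult_cancel_left[OF of_nat_neq_0])
  finally have "of_nat (Suc n) * (a (Suc n) / fact (Suc n)) = a (Suc n) / (fact n :: 'a)" .
  then show ?thesis by (simp add: fps_deriv_nth)
qed

lemma egf_mult_nth: "(egf a * egf b) $ n = binomial_conv a b n / fact n"
proof -
  have "(egf a * egf b) $ n = (\<Sum>j\<le>n. a j / fact j * (b (n - j) / fact (n - j)))"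
    by (simp add: fps_mult_nth atLeast0AtMost)
  also have "\<dots> = (\<Sum>j\<le>n. of_nat (n choose j) * (a j * b (n - j)) / fact n)"
  proof (rule sum.cong[OF refl])
    fix j assume "j \<in> {..n}"
    then have "(of_nat (n choose j) :: 'a) = fact n / (fact j * fact (n - j))"
      by (simp add: binomial_fact)
    then show "a j / fact j * (b (n - j) / fact (n - j)) = of_nat (n choose j) * (a j * b (n - j)) / fact n"
      by (simp add: field_simps)
  qed
  finally show ?thesis by (simp add: binomial_conv_def sum_divide_distrib)
qed

lemma fps_mult_nth_cong:
  assumes "\<forall>k\<le>n. A $ k = B $ k" "\<forall>k\<le>n. C $ k = D $ k"
  shows "(A * C) $ n = (B * D) $ n"
  using assms by (auto simp: fps_mult_nth intro!: sum.cong)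

lemma fps_ode_unique:
  fixes A B :: "'a::{idom, ring_char_0} fps"
  assumes A: "fps_deriv A = \<Phi> A" and B: "fps_deriv B = \<Phi> B" and init: "A $ 0 = B $ 0"
    and causal: "\<And>n Y Z. \<forall>k\<le>n. Y $ k = Z $ k \<Longrightarrow> \<Phi> Y $ n = \<Phi> Z $ n"
  shows "A = B"
proof -
  have "\<forall>k\<le>n. A $ k = B $ k" for n
  proof (induction n)
    case 0 then show ?case using init by simp
  next
    case (Suc n)
    have "fps_deriv A $ n = fps_deriv B $ n"
      unfolding A B by (rule causal[OF Suc.IH])
    then have "A $ Suc n = B $ Suc n"
      by (simp add: fps_deriv_nth del: of_nat_Suc)
    then show ?case using Suc.IH le_Suc_eq by auto
  qed
  then show ?thesis by (intro fps_ext) blast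
qed

lemma fps_cos_div_one_minus_sin_deriv:
  fixes W :: "'a::field_char_0 fps"
  defines "W \<equiv> fps_cos 1 * inverse (1 - fps_sin 1)"
  shows "fps_deriv W = fps_const (1/2) * (W * W + 1)"
proof -
  define S C I where "S = fps_sin (1::'a)" and "C = fps_cos (1::'a)" and "I = inverse (1 - S)"
  have I: "I * (1 - S) = 1" unfolding I_def by (rule inverse_mult_eq_1) (simp add: S_def)
  have CC: "C * C = 1 - S * S"
    using fps_sin_cos_sum_of_squares[of "1::'a"] by (simp add: S_def C_def power2_eq_square algebra_simps)
  have "C * C * (I * I) = (1 + S) * (I * (1 - S)) * I"
    unfolding CC by (simp add: algebra_simps)
  then have CCII: "C * C * (I * I) = (1 + S) * I" unfolding I by simp
  have dI: "fps_deriv I = C * (I * I)"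
    using fps_inverse_deriv[of "1 - S"] unfolding I_def
    by (simp add: S_def C_def fps_sin_deriv power2_eq_square)
  have dC: "fps_deriv C = - S"
    by (simp add: S_def C_def fps_cos_deriv fps_const_neg[symmetric])
  have "fps_deriv W = - S * I + C * C * (I * I)"
    unfolding W_def S_def[symmetric] C_def[symmetric] I_def[symmetric] fps_deriv_mult dC dI
    by (simp add: algebra_simps)
  also have "\<dots> = I" unfolding CCII by (simp add: algebra_simps)
  finally have dW: "fps_deriv W = I" .
  have "W * W + 1 = (1 + S) * I + I * (1 - S)"
    unfolding W_def S_def[symmetric] C_def[symmetric] I_def[symmetric] I
    using CCII by (simp add: algebra_simps)
  also have "\<dots> = fps_const 2 * I" by (simp add: algebra_simps numeral_fps_const)
  finally show ?thesis
    unfolding dW by (simp add: mult.assoc[symmetric] fps_const_mult[symmetric])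
qed

lemma fps_binomial_sin_deriv:
  fixes q :: "'a::field_char_0"
  defines "F \<equiv> inverse (fps_binomial q oo (- fps_sin 1))"
  shows "fps_deriv F = fps_const q * (fps_cos 1 * inverse (1 - fps_sin 1) * F)"
proof -
  define S C B I where "S = fps_sin (1::'a)" and "C = fps_cos (1::'a)"
    and "B = fps_binomial q" and "I = inverse (1 - S)"
  define V where "V = B oo (- S)"
  have S0: "(- S) $ 0 = 0" by (simp add: S_def)
  have V0: "V $ 0 \<noteq> 0" by (simp add: V_def B_def)
  have FV: "F * V = 1" unfolding F_def V_def B_def S_def by (rule inverse_mult_eq_1) (simp add: V0[unfolded V_def B_def S_def])
  have I: "I * (1 - S) = 1" unfolding I_def by (rule inverse_mult_eq_1) (simp add: S_def)
  have X0: "(1 + fps_X :: 'a fps) $ 0 \<noteq> 0" by simp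
  have "(1 + fps_X) * fps_deriv B = fps_const q * B * (inverse (1 + fps_X) * (1 + fps_X))"
    unfolding B_def fps_binomial_deriv fps_divide_unit[OF X0] by (simp only: ac_simps)
  then have binomial_ode: "(1 + fps_X) * fps_deriv B = fps_const q * B"
    using inverse_mult_eq_1[OF X0] by simp
  have "(1 - S) * (fps_deriv B oo (- S)) = ((1 + fps_X) * fps_deriv B) oo (- S)"
    unfolding fps_compose_mult_distrib[OF S0] fps_compose_add_distrib fps_compose_1
      fps_X_fps_compose_startby0[OF S0] by simp
  also have "\<dots> = fps_const q * V"
    unfolding binomial_ode V_def fps_compose_mult_distrib[OF S0] fps_const_compose ..
  finally have B'S_aux: "(1 - S) * (fps_deriv B oo (- S)) = fps_const q * V" .
  have "fps_deriv B oo (- S) = I * ((1 - S) * (fps_deriv B oo (- S)))"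
    by (simp only: mult.assoc[symmetric] I mult_1_left)
  then have B'S: "fps_deriv B oo (- S) = fps_const q * V * I"
    unfolding B'S_aux by (simp only: ac_simps)
  have dV: "fps_deriv V = (fps_deriv B oo (- S)) * (- C)"
    unfolding V_def fps_compose_deriv[OF S0] by (simp add: S_def C_def fps_sin_deriv)
  have "fps_deriv F = - fps_deriv V * (F * F)"
    using fps_inverse_deriv[OF V0] unfolding F_def V_def B_def S_def by (simp add: power2_eq_square)
  also have "\<dots> = fps_const q * (C * I * F) * (F * V)"
    unfolding dV B'S by (simp add: algebra_simps)
  finally show ?thesis unfolding FV C_def I_def S_def by simp
qed

lemma egf_riccati_poly_at_one:
  "egf (\<lambda>n. poly (riccati_poly n) 1) = fps_cos 1 * inverse (1 - fps_sin (1 :: 'a::field_char_0))"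
proof -
  define \<rho> where "\<rho> = (\<lambda>n. poly (riccati_poly n) (1 :: 'a))"
  define W where "W = fps_cos (1 :: 'a) * inverse (1 - fps_sin 1)"
  have quadratic: "2 * \<rho> (Suc n) = binomial_conv \<rho> \<rho> n + (if n = 0 then 1 else 0)" for n
  proof -
    have "poly (2 * riccati_poly (Suc n)) (1 :: 'a) =
        poly (binomial_conv riccati_poly riccati_poly n + (if n = 0 then [:-1, 2:] else 0)) 1"
      by (simp only: riccati_poly_quadratic)
    then show ?thesis by (simp add: \<rho>_def poly_binomial_conv del: riccati_poly.simps)
  qed
  have "fps_deriv (egf \<rho>) = fps_const (1/2) * (egf \<rho> * egf \<rho> + 1)"
  proof (rule fps_ext)
    fix n
    have "\<rho> (Suc n) = (binomial_conv \<rho> \<rho> n + (if n = 0 then 1 else 0)) / 2"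
      using quadratic[of n] by (simp add: field_simps)
    then show "fps_deriv (egf \<rho>) $ n = (fps_const (1/2) * (egf \<rho> * egf \<rho> + 1)) $ n"
      unfolding fps_deriv_egf_nth fps_mult_left_const_nth fps_add_nth egf_mult_nth fps_one_nth
      by (cases "n = 0") (simp_all add: field_simps)
  qed
  then have "egf \<rho> = W"
    using fps_cos_div_one_minus_sin_deriv[where 'a = 'a, folded W_def]
    by (rule fps_ode_unique[where \<Phi> = "\<lambda>Y. fps_const (1/2) * (Y * Y + 1)"])
      (simp_all add: W_def \<rho>_def fps_mult_nth_cong)
  then show ?thesis by (simp add: \<rho>_def W_def)
qed

lemma egf_insertion_operator_at_one:
  fixes g :: "nat \<Rightarrow> 'a::field_char_0 poly"
  assumes g0: "g 0 = 1" and g: "\<And>n. g (Suc n) = insertion_operator q n (g n)"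
  shows "egf (\<lambda>n. poly (g n) 1) = inverse (fps_binomial q oo (- fps_sin 1))"
proof -
  define \<gamma> where "\<gamma> = (\<lambda>n. poly (g n) 1)"
  define W where "W = fps_cos (1 :: 'a) * inverse (1 - fps_sin 1)"
  have "fps_deriv (egf \<gamma>) = fps_const q * (W * egf \<gamma>)"
  proof (rule fps_ext)
    fix n
    have "\<gamma> (Suc n) = q * binomial_conv (\<lambda>n. poly (riccati_poly n) 1) \<gamma> n"
      using arg_cong[OF insertion_operator_binomial_conv[OF g0 g, of n], of "\<lambda>p. poly p 1"]
      by (simp add: \<gamma>_def poly_binomial_conv)
    then show "fps_deriv (egf \<gamma>) $ n = (fps_const q * (W * egf \<gamma>)) $ n"
      unfolding fps_deriv_egf_nth W_def egf_riccati_poly_at_one[symmetric] by (simp add: egf_mult_nth)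
  qed
  moreover have "fps_deriv (inverse (fps_binomial q oo (- fps_sin 1))) =
      fps_const q * (W * inverse (fps_binomial q oo (- fps_sin 1)))"
    using fps_binomial_sin_deriv[of q] by (simp add: W_def)
  ultimately have "egf \<gamma> = inverse (fps_binomial q oo (- fps_sin 1))"
    by (rule fps_ode_unique[where \<Phi> = "\<lambda>Y. fps_const q * (W * Y)"])
      (simp_all add: \<gamma>_def g0 fps_mult_nth_cong)
  then show ?thesis by (simp add: \<gamma>_def)
qed

theorem mainTheorem12:
  fixes q x :: complex
  shows "Abs_fps (\<lambda>n. S_poly n 1 q / fact n)
           = inverse (fps_binomial q oo (- fps_sin 1))
     \<and> (\<forall>n m. n \<ge> 1 \<longrightarrow> n = 2 * m \<longrightarrow>
           S_poly n x (-1) = (1 - x) * (1 - 2 * x) ^ (m - 1))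
     \<and> (\<forall>n m. n \<ge> 1 \<longrightarrow> n = 2 * m + 1 \<longrightarrow>
           S_poly n x (-1) = - ((1 - 2 * x) ^ m))"
proof (intro conjI allI impI)
  show "Abs_fps (\<lambda>n. S_poly n 1 q / fact n) = inverse (fps_binomial q oo (- fps_sin 1))"
    using egf_insertion_operator_at_one[OF simsun_poly_0 simsun_poly_Suc, of q]
    by (simp add: egf_def poly_simsun_poly)
  have closed: "simsun_poly (-1) (2 * k + 1) = - ([:1, -2 :: complex:] ^ k)
      \<and> simsun_poly (-1) (2 * k + 2) = [:1, -1:] * [:1, -2 :: complex:] ^ k" for k
    by (rule insertion_operator_minus_one[OF simsun_poly_0 simsun_poly_Suc])
  fix n m :: nat
  show "n = 2 * m + 1 \<Longrightarrow> S_poly n x (-1) = - ((1 - 2 * x) ^ m)"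
    using closed[of m] by (simp flip: poly_simsun_poly add: poly_power algebra_simps)
  assume "1 \<le> n" "n = 2 * m"
  then obtain k where "n = 2 * k + 2" "m - 1 = k" by (cases m) auto
  then show "S_poly n x (-1) = (1 - x) * (1 - 2 * x) ^ (m - 1)"
    using closed[of k] by (simp flip: poly_simsun_poly add: poly_power algebra_simps)
qed

end
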